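(* Let $G$ be a group with a discrete left-invariant preordering $\preceq$, and let $a$ be a least positive element. Then for all $g,h\in G$: (1) if $1\preceq g$ and $1\preceq h$ then $1\prec agh$; (2) if $g\prec 1$ and $h\prec 1$ then $agh\prec 1$; (3) if $1\prec g$ then $1\prec aga^{-1}$ and $1\prec a^{-1}ga$; if $g\sim 1$ then $aga^{-1}\sim 1$ and $a^{-1}ga\sim 1$; if $g\prec 1$ then $aga^{-1}\prec 1$ and $a^{-1}ga\prec 1$.
   Context: A left-invariant preordering on a group $G$ is a relation $\preceq$ on $G$ that is reflexive, transitive and complete (for all $g,g'$ one has $g\preceq g'$ or $g'\preceq g$), and such that $g\preceq g'$ implies $hg\preceq hg'$ for all $h\in G$. Write $g\sim g'$ if $g\preceq g'$ and $g'\preceq g$, and $g\prec g'$ if $g\preceq g'$ and not $g\sim g'$. The preordering is discrete if there exists $a\in G$ with $1\prec a$ such that there is no $b\in G$ with $1\prec b\prec a$; such an $a$ is called a least positive element. *)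

theory Defs
  imports "HOL-Algebra.Group"
begin

definition left_inv_preorder :: "('a, 'b) monoid_scheme \<Rightarrow> ('a \<Rightarrow> 'a \<Rightarrow> bool) \<Rightarrow> bool" where
  "left_inv_preorder G P \<longleftrightarrow>
     (\<forall>g\<in>carrier G. P g g) \<and>
     (\<forall>g\<in>carrier G. \<forall>g'\<in>carrier G. \<forall>g''\<in>carrier G. P g g' \<longrightarrow> P g' g'' \<longrightarrow> P g g'') \<and>
     (\<forall>g\<in>carrier G. \<forall>g'\<in>carrier G. P g g' \<or> P g' g) \<and>
     (\<forall>g\<in>carrier G. \<forall>g'\<in>carrier G. \<forall>h\<in>carrier G. P g g' \<longrightarrow> P (h \<otimes>\<^bsub>G\<^esub> g) (h \<otimes>\<^bsub>G\<^esub> g'))"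

definition pequiv :: "('a \<Rightarrow> 'a \<Rightarrow> bool) \<Rightarrow> 'a \<Rightarrow> 'a \<Rightarrow> bool" where
  "pequiv P g g' \<longleftrightarrow> P g g' \<and> P g' g"

definition pless :: "('a \<Rightarrow> 'a \<Rightarrow> bool) \<Rightarrow> 'a \<Rightarrow> 'a \<Rightarrow> bool" where
  "pless P g g' \<longleftrightarrow> P g g' \<and> \<not> pequiv P g g'"

definition least_positive :: "('a, 'b) monoid_scheme \<Rightarrow> ('a \<Rightarrow> 'a \<Rightarrow> bool) \<Rightarrow> 'a \<Rightarrow> bool" where
  "least_positive G P a \<longleftrightarrow> a \<in> carrier G \<and> pless P \<one>\<^bsub>G\<^esub> a \<and>
     \<not> (\<exists>b\<in>carrier G. pless P \<one>\<^bsub>G\<^esub> b \<and> pless P b a)"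

definition discrete_preorder :: "('a, 'b) monoid_scheme \<Rightarrow> ('a \<Rightarrow> 'a \<Rightarrow> bool) \<Rightarrow> bool" where
  "discrete_preorder G P \<longleftrightarrow> (\<exists>a. least_positive G P a)"

end

theory Submission
  imports Defs
begin

text \<open>
  Since \<open>a\<close> is least positive, an element lies below \<open>1\<close> exactly when it lies strictly
  below \<open>a\<close>. Translating by \<open>a\<close> on the left, this says that \<open>a\<close> raises every element that is
  \<open>\<succeq> 1\<close> to a positive one and does not lift strict negatives above \<open>1\<close>, which gives (1) and (2).
  For (3), the same fact turns \<open>aga\<^sup>-\<^sup>1 \<preceq> 1\<close> into \<open>\<not> 1 \<preceq> ga\<^sup>-\<^sup>1\<close>, i.e. (after inversion)
  \<open>\<not> ag\<^sup>-\<^sup>1 \<preceq> 1\<close>, and once more into \<open>a \<preceq> ag\<^sup>-\<^sup>1\<close>, i.e. \<open>g \<preceq> 1\<close>; so conjugation by \<open>a\<close>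
  preserves the sign of every element.
\<close>

locale preordered_group = group G for G (structure) +
  fixes P :: "'a \<Rightarrow> 'a \<Rightarrow> bool"
  assumes left_inv_preorder: "left_inv_preorder G P"
begin

lemma le_trans: "P x y \<Longrightarrow> P y z \<Longrightarrow> x \<in> carrier G \<Longrightarrow> y \<in> carrier G \<Longrightarrow> z \<in> carrier G \<Longrightarrow> P x z"
  using left_inv_preorder unfolding left_inv_preorder_def by blast

lemma le_total: "x \<in> carrier G \<Longrightarrow> y \<in> carrier G \<Longrightarrow> P x y \<or> P y x"
  using left_inv_preorder unfolding left_inv_preorder_def by blast

lemma le_mult_left: "P x y \<Longrightarrow> h \<in> carrier G \<Longrightarrow> x \<in> carrier G \<Longrightarrow> y \<in> carrier G \<Longrightarrow> P (h \<otimes> x) (h \<otimes> y)"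
  using left_inv_preorder unfolding left_inv_preorder_def by blast

lemma le_mult_left_iff:
  assumes "h \<in> carrier G" "x \<in> carrier G" "y \<in> carrier G"
  shows "P (h \<otimes> x) (h \<otimes> y) \<longleftrightarrow> P x y"
proof
  assume "P (h \<otimes> x) (h \<otimes> y)"
  then have "P (inv h \<otimes> (h \<otimes> x)) (inv h \<otimes> (h \<otimes> y))"
    by (rule le_mult_left) (use assms in auto)
  moreover have "inv h \<otimes> (h \<otimes> z) = z" if "z \<in> carrier G" for z
    using assms that by (simp add: m_assoc[symmetric])
  ultimately show "P x y"
    using assms by simp
qed (use assms le_mult_left in blast)

lemma one_le_iff_inv_le_one: "x \<in> carrier G \<Longrightarrow> P \<one> x \<longleftrightarrow> P (inv x) \<one>"
  using le_mult_left_iff[of "inv x" \<one> x] by simp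

lemma pless_iff_not_le: "x \<in> carrier G \<Longrightarrow> y \<in> carrier G \<Longrightarrow> pless P x y \<longleftrightarrow> \<not> P y x"
  using le_total unfolding pless_def pequiv_def by blast

end

locale discretely_preordered_group = preordered_group +
  fixes a
  assumes least_positive: "least_positive G P a"
begin

lemma least_positive_closed [simp]: "a \<in> carrier G"
  using least_positive unfolding least_positive_def by blast

lemma least_positive_not_le_one: "\<not> P a \<one>"
  using least_positive unfolding least_positive_def pless_def pequiv_def by blast

lemma le_one_iff_not_ge_least_positive:
  assumes x: "x \<in> carrier G"
  shows "P x \<one> \<longleftrightarrow> \<not> P a x"
proof
  assume "P x \<one>"
  then show "\<not> P a x"
    using le_trans[of a x \<one>] least_positive_not_le_one x by auto
next
  assume "\<not> P a x"
  then have "pless P x a"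
    using x by (simp add: pless_iff_not_le)
  then have "\<not> pless P \<one> x"
    using least_positive x unfolding least_positive_def by blast
  then show "P x \<one>"
    using x by (simp add: pless_iff_not_le)
qed

lemma conj_le_one_iff:
  assumes g: "g \<in> carrier G"
  shows "P (a \<otimes> g \<otimes> inv a) \<one> \<longleftrightarrow> P g \<one>"
proof -
  have "P (a \<otimes> g \<otimes> inv a) \<one> \<longleftrightarrow> \<not> P (a \<otimes> \<one>) (a \<otimes> (g \<otimes> inv a))"
    using g by (simp add: le_one_iff_not_ge_least_positive m_assoc)
  also have "\<dots> \<longleftrightarrow> \<not> P \<one> (g \<otimes> inv a)"
    using g le_mult_left_iff[of a \<one> "g \<otimes> inv a"] by simp
  also have "\<dots> \<longleftrightarrow> \<not> P (a \<otimes> inv g) \<one>"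
    using g by (simp add: one_le_iff_inv_le_one inv_mult_group)
  also have "\<dots> \<longleftrightarrow> P (a \<otimes> \<one>) (a \<otimes> inv g)"
    using g by (simp add: le_one_iff_not_ge_least_positive)
  also have "\<dots> \<longleftrightarrow> P g \<one>"
    using g le_mult_left_iff[of a \<one> "inv g"] by (simp add: one_le_iff_inv_le_one)
  finally show ?thesis .
qed

lemma one_le_conj_iff:
  assumes g: "g \<in> carrier G"
  shows "P \<one> (a \<otimes> g \<otimes> inv a) \<longleftrightarrow> P \<one> g"
proof -
  have "inv (a \<otimes> g \<otimes> inv a) = a \<otimes> inv g \<otimes> inv a"
    using g by (simp add: inv_mult_group m_assoc)
  then show ?thesis
    using g conj_le_one_iff[of "inv g"] by (simp add: one_le_iff_inv_le_one)
qed

lemma conj_inv_le_one_iff: "g \<in> carrier G \<Longrightarrow> P (inv a \<otimes> g \<otimes> a) \<one> \<longleftrightarrow> P g \<one>"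
  using conj_le_one_iff[of "inv a \<otimes> g \<otimes> a"] by (simp add: m_assoc[symmetric]) (simp add: m_assoc)

lemma one_le_conj_inv_iff: "g \<in> carrier G \<Longrightarrow> P \<one> (inv a \<otimes> g \<otimes> a) \<longleftrightarrow> P \<one> g"
  using one_le_conj_iff[of "inv a \<otimes> g \<otimes> a"] by (simp add: m_assoc[symmetric]) (simp add: m_assoc)

lemma one_less_least_positive_mult:
  assumes g: "g \<in> carrier G" and h: "h \<in> carrier G" and "P \<one> g" "P \<one> h"
  shows "pless P \<one> (a \<otimes> g \<otimes> h)"
proof -
  have "P g (g \<otimes> h)"
    using le_mult_left[of \<one> h g] assms by simp
  then have "P \<one> (g \<otimes> h)"
    using le_trans[of \<one> g "g \<otimes> h"] assms by simp
  then have "P a (a \<otimes> g \<otimes> h)"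
    using le_mult_left_iff[of a \<one> "g \<otimes> h"] g h by (simp add: m_assoc)
  then show ?thesis
    using g h by (simp add: pless_iff_not_le le_one_iff_not_ge_least_positive)
qed

lemma least_positive_mult_less_one:
  assumes g: "g \<in> carrier G" and h: "h \<in> carrier G" and "\<not> P \<one> g" "\<not> P \<one> h"
  shows "pless P (a \<otimes> g \<otimes> h) \<one>"
proof -
  have "P (a \<otimes> g) \<one>"
    using assms le_mult_left_iff[of a \<one> g] by (simp add: le_one_iff_not_ge_least_positive)
  moreover have "\<not> P (a \<otimes> g) (a \<otimes> g \<otimes> h)"
    using assms le_mult_left_iff[of "a \<otimes> g" \<one> h] by simp
  ultimately have "\<not> P \<one> (a \<otimes> g \<otimes> h)"
    using le_trans[of "a \<otimes> g" \<one> "a \<otimes> g \<otimes> h"] g h by auto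
  then show ?thesis
    using g h by (simp add: pless_iff_not_le)
qed

end

theorem mainTheorem3:
  fixes G :: "('a, 'b) monoid_scheme" and P :: "'a \<Rightarrow> 'a \<Rightarrow> bool" and a :: 'a
  assumes "group G"
    and "left_inv_preorder G P"
    and "discrete_preorder G P"
    and "least_positive G P a"
  shows
    "\<forall>g\<in>carrier G. \<forall>h\<in>carrier G.
       ((P \<one>\<^bsub>G\<^esub> g \<and> P \<one>\<^bsub>G\<^esub> h \<longrightarrow> pless P \<one>\<^bsub>G\<^esub> (a \<otimes>\<^bsub>G\<^esub> g \<otimes>\<^bsub>G\<^esub> h)) \<and>
        (pless P g \<one>\<^bsub>G\<^esub> \<and> pless P h \<one>\<^bsub>G\<^esub> \<longrightarrow> pless P (a \<otimes>\<^bsub>G\<^esub> g \<otimes>\<^bsub>G\<^esub> h) \<one>\<^bsub>G\<^esub>) \<and>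
        (pless P \<one>\<^bsub>G\<^esub> g \<longrightarrow>
           pless P \<one>\<^bsub>G\<^esub> (a \<otimes>\<^bsub>G\<^esub> g \<otimes>\<^bsub>G\<^esub> inv\<^bsub>G\<^esub> a) \<and>
           pless P \<one>\<^bsub>G\<^esub> (inv\<^bsub>G\<^esub> a \<otimes>\<^bsub>G\<^esub> g \<otimes>\<^bsub>G\<^esub> a)) \<and>
        (pequiv P g \<one>\<^bsub>G\<^esub> \<longrightarrow>
           pequiv P (a \<otimes>\<^bsub>G\<^esub> g \<otimes>\<^bsub>G\<^esub> inv\<^bsub>G\<^esub> a) \<one>\<^bsub>G\<^esub> \<and>
           pequiv P (inv\<^bsub>G\<^esub> a \<otimes>\<^bsub>G\<^esub> g \<otimes>\<^bsub>G\<^esub> a) \<one>\<^bsub>G\<^esub>) \<and>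
        (pless P g \<one>\<^bsub>G\<^esub> \<longrightarrow>
           pless P (a \<otimes>\<^bsub>G\<^esub> g \<otimes>\<^bsub>G\<^esub> inv\<^bsub>G\<^esub> a) \<one>\<^bsub>G\<^esub> \<and>
           pless P (inv\<^bsub>G\<^esub> a \<otimes>\<^bsub>G\<^esub> g \<otimes>\<^bsub>G\<^esub> a) \<one>\<^bsub>G\<^esub>))"
proof -
  interpret discretely_preordered_group G P a
    using assms by (simp add: discretely_preordered_group_def
        discretely_preordered_group_axioms_def preordered_group_def preordered_group_axioms_def)
  show ?thesis
    using one_less_least_positive_mult least_positive_mult_less_one
    by (simp add: pless_iff_not_le pequiv_def conj_le_one_iff one_le_conj_iff
        conj_inv_le_one_iff one_le_conj_inv_iff)
qed

end
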